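(* Let $f$ be a function, $x^\star$ one of its global optima with associated $(\nu,\rho)$, let $C>1$, and let $d=d(\nu,C,\rho)>0$. Set \[ \tilde n=\Big\lfloor \frac{n}{\bar\log n}\Big\rfloor\,\frac{d\log(1/\rho)}{C}, \] and assume $\tilde n>e$. Then after a run of \texttt{SequOOL} with budget $n$ (deterministic feedback), the simple regret satisfies \[ r_n\le \nu\Big(\frac{\tilde n}{\log \tilde n}\Big)^{-1/d}. \]
   Context: Let $\mathcal X$ be a set and $f:\mathcal X\to\mathbb R$ a function attaining its supremum; a point $x^\star$ with $f(x^\star)=\sup_{x\in\mathcal X}f(x)$ is a global optimum. Hierarchical partitioning $\mathcal P=\{\mathcal P_{h,i}\}$: - for every depth $h\ge 0$, the cells $\{\mathcal P_{h,i}\}_{1\le i\le I_h}$ form a partition of $\mathcal X$, and $\mathcal P_{0,1}=\mathcal X$; - each cell $\mathcal P_{h,i}$ is partitioned into finitely many children cells of depth $h+1$; - each cell has a fixed representative point $x_{h,i}\in\mathcal P_{h,i}$, and we write $f_{h,i}=f(x_{h,i})$; - for a global optimum $x^\star$, $i^\star_h$ is the index of the unique depth-$h$ cell containing $x^\star$. Local smoothness: a global optimum $x^\star$ has associated $(\nu,\rho)$, with $\nu>0$ and $\rho\in(0,1)$, if for all $h\in\mathbb N$ and all $x\in\mathcal P_{h,i^\star_h}$ we have $f(x)\ge f(x^\star)-\nu\rho^h$. Near-optimality dimension: for $\nu>0$, $C>1$, $\rho\in(0,1)$, let $\mathcal N_h(\epsilon)$ be the number of depth-$h$ cells $\mathcal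 P_{h,i}$ with $\sup_{x\in\mathcal P_{h,i}}f(x)\ge f(x^\star)-\epsilon$. Define \[ d(\nu,C,\rho)=\inf\{d'\ge 0:\ \forall h\ge 0,\ \mathcal N_h(3\nu\rho^h)\le C\rho^{-d'h}\}, \] which is assumed finite. Notation: $\bar\log n=\sum_{t=1}^n 1/t$ (the $n$-th harmonic number). Simple regret: $r_n=f(x^\star)-f(x(n))$. Deterministic feedback: evaluating a cell $\mathcal P_{h,i}$ returns $f_{h,i}$ exactly. Opening a cell means evaluating each of its children cells once. \texttt{SequOOL} with budget $n$: set $h_{\max}=\lfloor n/\bar\log n\rfloor$ and open $\mathcal P_{0,1}$. Then, for $h=1,2,\dots,h_{\max}$ in increasing order, open the $\lfloor h_{\max}/h\rfloor$ depth-$h$ cells having the largest values $f_{h,j}$ among the evaluated depth-$h$ cells (or all of them if there are fewer). Finally, output $x(n)$, a representative point $x_{h,i}$ of an evaluated cell maximizing $f_{h,i}$. *)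

theory Defs
  imports "HOL-Analysis.Analysis"
begin

text \<open>Hierarchical partitioning of X: depth h has cells P h i, 1 \<le> i \<le> I h,
  with representative points x h i.\<close>

definition children :: "(nat \<Rightarrow> nat) \<Rightarrow> (nat \<Rightarrow> nat \<Rightarrow> 'a set) \<Rightarrow> nat \<Rightarrow> nat \<Rightarrow> nat set" where
  "children I P h i = {j \<in> {1..I (Suc h)}. P (Suc h) j \<subseteq> P h i}"

definition hier_partition ::
  "'a set \<Rightarrow> (nat \<Rightarrow> nat) \<Rightarrow> (nat \<Rightarrow> nat \<Rightarrow> 'a set) \<Rightarrow> (nat \<Rightarrow> nat \<Rightarrow> 'a) \<Rightarrow> bool" where
  "hier_partition X I P x \<longleftrightarrow>
     I 0 = 1 \<and> P 0 1 = X \<and>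
     (\<forall>h. (\<Union>i\<in>{1..I h}. P h i) = X \<and>
          (\<forall>i\<in>{1..I h}. \<forall>j\<in>{1..I h}. i \<noteq> j \<longrightarrow> P h i \<inter> P h j = {})) \<and>
     (\<forall>h. \<forall>i\<in>{1..I h}. P h i = (\<Union>j\<in>children I P h i. P (Suc h) j)) \<and>
     (\<forall>h. \<forall>i\<in>{1..I h}. x h i \<in> P h i)"

definition opt_index :: "(nat \<Rightarrow> nat) \<Rightarrow> (nat \<Rightarrow> nat \<Rightarrow> 'a set) \<Rightarrow> 'a \<Rightarrow> nat \<Rightarrow> nat" where
  "opt_index I P xstar h = (THE i. i \<in> {1..I h} \<and> xstar \<in> P h i)"

definition local_smooth ::
  "('a \<Rightarrow> real) \<Rightarrow> (nat \<Rightarrow> nat) \<Rightarrow> (nat \<Rightarrow> nat \<Rightarrow> 'a set) \<Rightarrow> 'a \<Rightarrow> real \<Rightarrow> real \<Rightarrow> bool" where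
  "local_smooth f I P xstar \<nu> \<rho> \<longleftrightarrow>
     (\<forall>h. \<forall>y \<in> P h (opt_index I P xstar h). f y \<ge> f xstar - \<nu> * \<rho> ^ h)"

definition near_opt_count ::
  "('a \<Rightarrow> real) \<Rightarrow> (nat \<Rightarrow> nat) \<Rightarrow> (nat \<Rightarrow> nat \<Rightarrow> 'a set) \<Rightarrow> 'a \<Rightarrow> nat \<Rightarrow> real \<Rightarrow> nat" where
  "near_opt_count f I P xstar h \<epsilon> =
     card {i \<in> {1..I h}. Sup (f ` P h i) \<ge> f xstar - \<epsilon>}"

definition near_opt_set ::
  "('a \<Rightarrow> real) \<Rightarrow> (nat \<Rightarrow> nat) \<Rightarrow> (nat \<Rightarrow> nat \<Rightarrow> 'a set) \<Rightarrow> 'a \<Rightarrow> real \<Rightarrow> real \<Rightarrow> real \<Rightarrow> real set" where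
  "near_opt_set f I P xstar \<nu> C \<rho> =
     {d'. d' \<ge> 0 \<and> (\<forall>h. real (near_opt_count f I P xstar h (3 * \<nu> * \<rho> ^ h)) \<le> C * \<rho> powr (- d' * real h))}"

definition near_opt_dim ::
  "('a \<Rightarrow> real) \<Rightarrow> (nat \<Rightarrow> nat) \<Rightarrow> (nat \<Rightarrow> nat \<Rightarrow> 'a set) \<Rightarrow> 'a \<Rightarrow> real \<Rightarrow> real \<Rightarrow> real \<Rightarrow> real" where
  "near_opt_dim f I P xstar \<nu> C \<rho> = Inf (near_opt_set f I P xstar \<nu> C \<rho>)"

definition sequool_hmax :: "nat \<Rightarrow> nat" where
  "sequool_hmax n = nat \<lfloor>real n / (harm n :: real)\<rfloor>"

definition evaluated ::
  "(nat \<Rightarrow> nat) \<Rightarrow> (nat \<Rightarrow> nat \<Rightarrow> 'a set) \<Rightarrow> (nat \<Rightarrow> nat set) \<Rightarrow> nat \<Rightarrow> nat set" where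
  "evaluated I P Op h = (if h = 0 then {} else (\<Union>i\<in>Op (h - 1). children I P (h - 1) i))"

text \<open>A run of SequOOL with budget n (any tie-breaking): Op h are the opened
  depth-h cells, out = (h,i) is the evaluated cell whose representative is returned.\<close>
definition sequool_run ::
  "('a \<Rightarrow> real) \<Rightarrow> (nat \<Rightarrow> nat) \<Rightarrow> (nat \<Rightarrow> nat \<Rightarrow> 'a set) \<Rightarrow> (nat \<Rightarrow> nat \<Rightarrow> 'a) \<Rightarrow> nat
     \<Rightarrow> (nat \<Rightarrow> nat set) \<Rightarrow> nat \<times> nat \<Rightarrow> bool" where
  "sequool_run f I P x n Op out \<longleftrightarrow>
     (let hmax = sequool_hmax n in
       Op 0 = {1} \<and>
       (\<forall>h. 1 \<le> h \<and> h \<le> hmax \<longrightarrow>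
          Op h \<subseteq> evaluated I P Op h \<and>
          card (Op h) = min (hmax div h) (card (evaluated I P Op h)) \<and>
          (\<forall>i\<in>Op h. \<forall>j\<in>evaluated I P Op h - Op h. f (x h j) \<le> f (x h i))) \<and>
       (\<forall>h. hmax < h \<longrightarrow> Op h = {}) \<and>
       snd out \<in> evaluated I P Op (fst out) \<and>
       (\<forall>h. \<forall>j\<in>evaluated I P Op h. f (x h j) \<le> f (x (fst out) (snd out))))"

definition ntilde :: "nat \<Rightarrow> real \<Rightarrow> real \<Rightarrow> real \<Rightarrow> real" where
  "ntilde n d \<rho> C = real (sequool_hmax n) * d * ln (1 / \<rho>) / C"

end

theory Submission imports Defs begin

text \<open>If the cell of depth \<open>h\<close> containing \<open>x\<^sup>\<star>\<close> is evaluated but not opened, then it and the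
  \<open>\<lfloor>hmax/h\<rfloor>\<close> opened cells all have representative value at least \<open>f(x\<^sup>\<star>) - \<nu>\<rho>\<^sup>h\<close>, so they are
  all \<open>3\<nu>\<rho>\<^sup>h\<close>-near-optimal; as there are at most \<open>C\<rho>\<^sup>-\<^sup>d\<^sup>h\<close> such cells, this cannot happen while
  \<open>C\<rho>\<^sup>-\<^sup>d\<^sup>h \<le> hmax/h\<close>. By induction the optimal cell is opened at every depth below
  \<open>h = \<lceil>log(\<tilde>n/log \<tilde>n)/(d log(1/\<rho>))\<rceil>\<close>, hence its child at depth \<open>h\<close> is evaluated, and the
  returned point is at least as good as that child, i.e. within \<open>\<nu>\<rho>\<^sup>h \<le> \<nu>(\<tilde>n/log \<tilde>n)\<^sup>-\<^sup>1\<^sup>/\<^sup>d\<close>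
  of the optimum.\<close>

lemma opt_index_cell:
  assumes part: "hier_partition X I P x" and xstar: "xstar \<in> X"
  shows "opt_index I P xstar h \<in> {1..I h}" and "xstar \<in> P h (opt_index I P xstar h)"
proof -
  from part have cover: "(\<Union>i\<in>{1..I h}. P h i) = X"
    and disj: "\<forall>i\<in>{1..I h}. \<forall>j\<in>{1..I h}. i \<noteq> j \<longrightarrow> P h i \<inter> P h j = {}"
    unfolding hier_partition_def by blast+
  obtain i where i: "i \<in> {1..I h}" "xstar \<in> P h i" using cover xstar by blast
  have "opt_index I P xstar h = i"
    unfolding opt_index_def using i disj by (intro the_equality; blast)
  with i show "opt_index I P xstar h \<in> {1..I h}" "xstar \<in> P h (opt_index I P xstar h)"
    by simp_all
qed

lemma opt_index_eqI:
  assumes part: "hier_partition X I P x" and xstar: "xstar \<in> X"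
    and "i \<in> {1..I h}" "xstar \<in> P h i"
  shows "opt_index I P xstar h = i"
  using assms opt_index_cell[OF part xstar, of h] unfolding hier_partition_def by blast

lemma opt_index_Suc_in_children:
  assumes part: "hier_partition X I P x" and xstar: "xstar \<in> X"
  shows "opt_index I P xstar (Suc h) \<in> children I P h (opt_index I P xstar h)"
proof -
  let ?i = "opt_index I P xstar h"
  have "P h ?i = (\<Union>j\<in>children I P h ?i. P (Suc h) j)"
    using part opt_index_cell(1)[OF part xstar] unfolding hier_partition_def by blast
  then obtain j where j: "j \<in> children I P h ?i" "xstar \<in> P (Suc h) j"
    using opt_index_cell(2)[OF part xstar] by blast
  have "j \<in> {1..I (Suc h)}" using j(1) unfolding children_def by auto
  with j show ?thesis using opt_index_eqI[OF part xstar] by metis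
qed

lemma opt_index_value_ge:
  assumes part: "hier_partition X I P x" and xstar: "xstar \<in> X"
    and smooth: "local_smooth f I P xstar \<nu> \<rho>"
  shows "f (x h (opt_index I P xstar h)) \<ge> f xstar - \<nu> * \<rho> ^ h"
  using smooth opt_index_cell(1)[OF part xstar, of h] part
  unfolding local_smooth_def hier_partition_def by blast

lemma representative_le_Sup_cell:
  assumes part: "hier_partition X I P x" and opt: "\<forall>y\<in>X. f y \<le> (f xstar :: real)"
    and i: "i \<in> {1..I h}"
  shows "f (x h i) \<le> Sup (f ` P h i)"
proof -
  have "P h i \<subseteq> X" "x h i \<in> P h i" using part i unfolding hier_partition_def by blast+
  then show ?thesis using opt by (intro cSup_upper bdd_aboveI[of _ "f xstar"]) auto
qed

lemma evaluated_subset: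
  "evaluated I P Op (Suc h) \<subseteq> {1..I (Suc h)}"
  unfolding evaluated_def children_def by auto

text \<open>The near-optimality dimension is an infimum, and the bound \<open>C b\<^sup>e\<^sup>t\<close> is continuous in \<open>e\<close>,
  so the defining inequality also holds at the infimum itself.\<close>

lemma le_powr_Inf:
  fixes S :: "real set"
  assumes S: "S \<noteq> {}" and C: "C > 0" and b: "b > 1" and t: "t \<ge> 0"
    and bound: "\<And>e. e \<in> S \<Longrightarrow> N \<le> C * b powr (e * t)"
  shows "N \<le> C * b powr (Inf S * t)"
proof -
  consider "N \<le> 0" | "t = 0" | "N > 0" "t > 0" using t by linarith
  then show ?thesis
  proof cases
    case 1
    then show ?thesis using C b by (smt (verit) mult_pos_pos powr_gt_zero)
  next
    case 2
    then show ?thesis using S bound by fastforce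
  next
    case 3
    have lnb: "ln b > 0" using b by simp
    have "ln (N / C) / (t * ln b) \<le> Inf S"
    proof (rule cInf_greatest[OF S])
      fix e assume "e \<in> S"
      then have "N / C \<le> exp (e * t * ln b)"
        using bound C b by (simp add: powr_def field_simps)
      then have "ln (N / C) \<le> e * t * ln b"
        using 3 C by (metis divide_pos_pos ln_exp ln_le_cancel_iff exp_gt_zero)
      then show "ln (N / C) / (t * ln b) \<le> e" using 3 lnb by (simp add: field_simps)
    qed
    then have "ln (N / C) \<le> Inf S * t * ln b" using 3 lnb by (simp add: field_simps)
    then have "N / C \<le> exp (Inf S * t * ln b)"
      using 3 C by (metis divide_pos_pos exp_ln exp_le_cancel_iff)
    then show ?thesis using C b by (simp add: powr_def field_simps)
  qed
qed

lemma near_opt_count_le_dim: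
  assumes dfin: "near_opt_set f I P xstar \<nu> C \<rho> \<noteq> {}"
    and rho: "0 < \<rho>" "\<rho> < 1" and C: "C > 0"
  shows "real (near_opt_count f I P xstar h (3 * \<nu> * \<rho> ^ h))
           \<le> C * \<rho> powr (- near_opt_dim f I P xstar \<nu> C \<rho> * real h)"
proof -
  have flip: "(1 / \<rho>) powr y = \<rho> powr (- y)" for y
    using rho by (simp add: powr_divide powr_minus_divide)
  have "real (near_opt_count f I P xstar h (3 * \<nu> * \<rho> ^ h))
      \<le> C * (1 / \<rho>) powr (near_opt_dim f I P xstar \<nu> C \<rho> * real h)"
    unfolding near_opt_dim_def
    by (rule le_powr_Inf[OF dfin C]) (use rho in \<open>auto simp: near_opt_set_def flip\<close>)
  then show ?thesis by (simp add: flip)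
qed

lemma not_opened_near_opt_count:
  assumes part: "hier_partition X I P x"
    and opt: "xstar \<in> X" "\<forall>y\<in>X. f y \<le> f xstar"
    and nu: "\<nu> > 0" and rho: "\<rho> > 0"
    and smooth: "local_smooth f I P xstar \<nu> \<rho>"
    and run: "sequool_run f I P x n Op out"
    and h: "1 \<le> h" "h \<le> sequool_hmax n"
    and evaluated: "opt_index I P xstar h \<in> evaluated I P Op h"
    and not_opened: "opt_index I P xstar h \<notin> Op h"
  shows "sequool_hmax n div h + 1 \<le> near_opt_count f I P xstar h (3 * \<nu> * \<rho> ^ h)"
proof -
  let ?s = "opt_index I P xstar h"
  let ?E = "evaluated I P Op h"
  let ?A = "{i \<in> {1..I h}. Sup (f ` P h i) \<ge> f xstar - 3 * \<nu> * \<rho> ^ h}"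
  have E: "?E \<subseteq> {1..I h}" using evaluated_subset[of I P Op "h - 1"] h by simp
  from run h have OpE: "Op h \<subseteq> ?E"
    and card_Op: "card (Op h) = min (sequool_hmax n div h) (card ?E)"
    and greedy: "\<forall>i\<in>Op h. \<forall>j\<in>?E - Op h. f (x h j) \<le> f (x h i)"
    unfolding sequool_run_def Let_def by auto
  have finE: "finite ?E" using finite_subset[OF E] by simp
  have "card (Op h) < card ?E"
    using not_opened evaluated OpE finE by (intro psubset_card_mono) auto
  then have card_Op': "card (Op h) = sequool_hmax n div h" using card_Op by simp
  have good: "i \<in> ?A" if i: "i \<in> ?E" "f (x h ?s) \<le> f (x h i)" for i
  proof -
    have "i \<in> {1..I h}" using i(1) E by blast
    moreover have "0 \<le> \<nu> * \<rho> ^ h" using nu rho by simp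
    ultimately show ?thesis
      using representative_le_Sup_cell[OF part opt(2), of i h] i(2)
        opt_index_value_ge[OF part opt(1) smooth, of h] by simp
  qed
  have "insert ?s (Op h) \<subseteq> ?A"
  proof
    fix i assume "i \<in> insert ?s (Op h)"
    then have "i \<in> ?E" "f (x h ?s) \<le> f (x h i)"
      using evaluated OpE greedy not_opened by auto
    then show "i \<in> ?A" by (rule good)
  qed
  then have "card (insert ?s (Op h)) \<le> card ?A" by (intro card_mono) auto
  moreover have "card (insert ?s (Op h)) = sequool_hmax n div h + 1"
    using card_Op' not_opened finite_subset[OF OpE finE] by simp
  ultimately show ?thesis unfolding near_opt_count_def by simp
qed

lemma opt_index_opened:
  assumes part: "hier_partition X I P x"
    and opt: "xstar \<in> X" "\<forall>y\<in>X. f y \<le> f xstar"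
    and nu: "\<nu> > 0" and rho: "0 < \<rho>" "\<rho> < 1"
    and smooth: "local_smooth f I P xstar \<nu> \<rho>"
    and C: "C > 0" and dfin: "near_opt_set f I P xstar \<nu> C \<rho> \<noteq> {}"
    and run: "sequool_run f I P x n Op out"
    and depths: "\<And>h. 1 \<le> h \<Longrightarrow> h \<le> H \<Longrightarrow> h \<le> sequool_hmax n \<and>
        C * \<rho> powr (- near_opt_dim f I P xstar \<nu> C \<rho> * real h) < real (sequool_hmax n div h) + 1"
  shows "k \<le> H \<Longrightarrow> opt_index I P xstar k \<in> Op k"
proof (induction k)
  case 0
  have "I 0 = 1" "Op 0 = {1}"
    using part run unfolding hier_partition_def sequool_run_def Let_def by auto
  then show ?case using opt_index_cell(1)[OF part opt(1), of 0] by simp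
next
  case (Suc k)
  have evaluated: "opt_index I P xstar (Suc k) \<in> evaluated I P Op (Suc k)"
    using Suc opt_index_Suc_in_children[OF part opt(1), of k] unfolding evaluated_def by auto
  have depth: "Suc k \<le> sequool_hmax n"
    "C * \<rho> powr (- near_opt_dim f I P xstar \<nu> C \<rho> * real (Suc k))
       < real (sequool_hmax n div Suc k) + 1"
    using depths[of "Suc k"] Suc.prems by auto
  show ?case
  proof (rule ccontr)
    assume "opt_index I P xstar (Suc k) \<notin> Op (Suc k)"
    from not_opened_near_opt_count[OF part opt nu rho(1) smooth run _ depth(1) evaluated this]
    have "real (sequool_hmax n div Suc k) + 1
        \<le> real (near_opt_count f I P xstar (Suc k) (3 * \<nu> * \<rho> ^ Suc k))"
      by simp
    also have "\<dots> \<le> C * \<rho> powr (- near_opt_dim f I P xstar \<nu> C \<rho> * real (Suc k))"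
      by (rule near_opt_count_le_dim[OF dfin rho C])
    finally show False using depth(2) by simp
  qed
qed

lemma real_div_lt_nat_div_plus_1:
  assumes "h > 0"
  shows "real m / real h < real (m div h) + 1"
proof -
  have "real m = real h * real (m div h) + real (m mod h)"
    by (metis of_nat_add of_nat_mult div_mult_mod_eq mult.commute)
  moreover have "real (m mod h) < real h" using assms by simp
  ultimately show ?thesis using assms by (simp add: divide_less_eq algebra_simps)
qed

lemma div_ln_gt_one:
  fixes N :: real
  assumes "N > exp 1"
  shows "N / ln N > 1"
proof -
  have "N > 0" using less_trans[OF exp_gt_zero[of 1] assms] .
  then have "ln N > 1" "ln N < N"
    using assms ln_less_cancel_iff[of "exp 1" N] ln_less_self by auto
  then show ?thesis by (simp add: less_divide_eq)
qed

text \<open>With \<open>a = d log(1/\<rho>)\<close> and \<open>\<tilde>n = m a / C\<close>, a depth \<open>t \<le> log(\<tilde>n/log \<tilde>n)/a\<close> has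
  \<open>e\<^sup>a\<^sup>t \<le> \<tilde>n/log \<tilde>n\<close>, so \<open>t C e\<^sup>a\<^sup>t \<le> m log(\<tilde>n/log \<tilde>n)/log \<tilde>n \<le> m\<close>.\<close>

lemma depth_cost_le_budget:
  fixes m :: nat and a C N t :: real
  assumes a: "a > 0" and C: "C > 0" and N: "N = real m * a / C" "N > exp 1"
    and t: "0 \<le> t" "t \<le> ln (N / ln N) / a"
  shows "t * C * exp (a * t) \<le> real m"
proof -
  define Q where "Q = N / ln N"
  have Q_gt_1: "Q > 1" unfolding Q_def using div_ln_gt_one[OF N(2)] .
  have "N > 0" using less_trans[OF exp_gt_zero[of 1] N(2)] .
  then have lnN: "ln N > 1" using N(2) by (metis ln_exp ln_less_cancel_iff exp_gt_zero)
  have lnQ: "0 < ln Q" "ln Q \<le> ln N" using Q_gt_1 lnN unfolding Q_def by (simp_all add: ln_div)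
  have tQ: "t \<le> ln Q / a" using t(2) unfolding Q_def .
  have CQ: "C * Q = real m * a / ln N" using N(1) C unfolding Q_def by simp
  have "exp (a * t) \<le> exp (ln Q)" using tQ a by (simp add: field_simps)
  then have "t * C * exp (a * t) \<le> ln Q / a * C * Q"
    using t tQ C Q_gt_1 lnQ a by (intro mult_mono) auto
  also have "\<dots> = ln Q / a * (C * Q)" by simp
  also have "\<dots> = real m * (ln Q / ln N)" using a by (simp add: CQ)
  also have "\<dots> \<le> real m" using lnQ lnN by (intro mult_left_le) auto
  finally show ?thesis .
qed

lemma depth_within_budget:
  fixes m k :: nat and a C N :: real
  assumes a: "a > 0" and C: "C > 1" and N: "N = real m * a / C" "N > exp 1"
    and k: "1 \<le> k" "real k \<le> ln (N / ln N) / a"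
  shows "k \<le> m" and "C * exp (a * real k) < real (m div k) + 1"
proof -
  have cost: "real k * (C * exp (a * real k)) \<le> real m"
    using depth_cost_le_budget[OF a _ N, of "real k"] C k by (simp add: ac_simps)
  have "1 \<le> exp (a * real k)" using a by simp
  then have "1 < C * exp (a * real k)" using C by (simp add: less_1_mult less_le_trans)
  then have "real k < real k * (C * exp (a * real k))" using k by simp
  with cost show "k \<le> m" by simp
  have "C * exp (a * real k) \<le> real m / real k" using cost k by (simp add: field_simps)
  with real_div_lt_nat_div_plus_1[of k m] k show "C * exp (a * real k) < real (m div k) + 1"
    by simp
qed

lemma power_le_powr_of_depth:
  assumes rho: "0 < \<rho>" "\<rho> < 1" and d: "d > 0" and Q: "Q > 0"
    and h: "ln Q / (d * ln (1 / \<rho>)) \<le> real h"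
  shows "\<rho> ^ h \<le> Q powr (- 1 / d)"
proof -
  have L: "ln (1 / \<rho>) > 0" using rho by simp
  have "\<rho> ^ h = exp (- (real h * ln (1 / \<rho>)))"
    using rho by (simp add: ln_div exp_of_nat_mult[symmetric] powr_realpow[symmetric] powr_def)
  also have "\<dots> \<le> exp (- (ln Q / d))"
    using h L d by (simp add: field_simps)
  also have "\<dots> = Q powr (- 1 / d)" using Q by (simp add: powr_def)
  finally show ?thesis .
qed

theorem corollary3:
  fixes X :: "'a set" and f :: "'a \<Rightarrow> real"
    and I :: "nat \<Rightarrow> nat" and P :: "nat \<Rightarrow> nat \<Rightarrow> 'a set" and x :: "nat \<Rightarrow> nat \<Rightarrow> 'a"
    and xstar :: 'a and \<nu> \<rho> C :: real and n :: nat
    and Op :: "nat \<Rightarrow> nat set" and out :: "nat \<times> nat"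
  assumes part: "hier_partition X I P x"
    and opt: "xstar \<in> X" "\<forall>y\<in>X. f y \<le> f xstar"
    and nu: "\<nu> > 0" and rho: "0 < \<rho>" "\<rho> < 1"
    and smooth: "local_smooth f I P xstar \<nu> \<rho>"
    and C: "C > 1"
    and dfin: "near_opt_set f I P xstar \<nu> C \<rho> \<noteq> {}"
    and dpos: "near_opt_dim f I P xstar \<nu> C \<rho> > 0"
    and nt: "ntilde n (near_opt_dim f I P xstar \<nu> C \<rho>) \<rho> C > exp 1"
    and run: "sequool_run f I P x n Op out"
  shows "f xstar - f (x (fst out) (snd out))
           \<le> \<nu> * (ntilde n (near_opt_dim f I P xstar \<nu> C \<rho>) \<rho> C
                 / ln (ntilde n (near_opt_dim f I P xstar \<nu> C \<rho>) \<rho> C))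
                 powr (- 1 / near_opt_dim f I P xstar \<nu> C \<rho>)"
proof -
  define d where "d = near_opt_dim f I P xstar \<nu> C \<rho>"
  define N where "N = ntilde n d \<rho> C"
  define a where "a = d * ln (1 / \<rho>)"
  define h where "h = nat \<lceil>ln (N / ln N) / a\<rceil>"
  have a: "a > 0" using dpos rho unfolding a_def d_def by simp
  have N: "N = real (sequool_hmax n) * a / C" "N > exp 1"
    using nt unfolding N_def a_def d_def ntilde_def by (simp_all add: ac_simps)
  have ratio_gt_1: "N / ln N > 1" using div_ln_gt_one[OF N(2)] .
  have "ln (N / ln N) / a > 0" using ratio_gt_1 a by simp
  then have h1: "h \<ge> 1" unfolding h_def by linarith
  have "opt_index I P xstar (h - 1) \<in> Op (h - 1)"
  proof (rule opt_index_opened[OF part opt nu rho smooth _ dfin run])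
    fix k assume k: "1 \<le> k" "k \<le> h - 1"
    then have "real k \<le> ln (N / ln N) / a" unfolding h_def by linarith
    from depth_within_budget[OF a C N k(1) this] rho
    show "k \<le> sequool_hmax n \<and> C * \<rho> powr (- near_opt_dim f I P xstar \<nu> C \<rho> * real k)
          < real (sequool_hmax n div k) + 1"
      unfolding a_def d_def by (simp add: powr_def ln_div algebra_simps)
  qed (use C in auto)
  then have "opt_index I P xstar h \<in> evaluated I P Op h"
    using opt_index_Suc_in_children[OF part opt(1), of "h - 1"] h1
    unfolding evaluated_def by (cases h) auto
  then have "f (x h (opt_index I P xstar h)) \<le> f (x (fst out) (snd out))"
    using run unfolding sequool_run_def Let_def by blast
  moreover have "f (x h (opt_index I P xstar h)) \<ge> f xstar - \<nu> * \<rho> ^ h"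
    by (rule opt_index_value_ge[OF part opt(1) smooth])
  moreover have "\<rho> ^ h \<le> (N / ln N) powr (- 1 / d)"
    using ratio_gt_1 dpos rho unfolding d_def
    by (intro power_le_powr_of_depth) (auto simp: h_def a_def d_def)
  then have "\<nu> * \<rho> ^ h \<le> \<nu> * (N / ln N) powr (- 1 / d)" using nu by simp
  ultimately show ?thesis unfolding N_def d_def by linarith
qed
end
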